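(* Let $r \geq 1$ be an integer. Then for every integer $n \geq 0$, $$\sum_{k=0}^{n} \frac{s(n,k)}{k+r} = \sum_{k=0}^{r-1} \lambda_{r,n,k}\, B_{n+k}^*,$$ where for each $k \in \{0,1,\dots,r-1\}$, $$\lambda_{r,n,k} := \sum_{\ell=0}^{r-1-k} \binom{r-1}{\ell} S(r-1-\ell,k)\, n^{\ell}$$ (with the convention $0^0 = 1$).
   Context: For $n \geq 0$, $X^{\underline{n}} := X(X-1)\cdots(X-n+1)$ ($X^{\underline{0}}=1$). The (signed) Stirling numbers of the first kind $s(n,k)$ are defined by $X^{\underline{n}} = \sum_{k=0}^{n} s(n,k) X^k$, and the Stirling numbers of the second kind $S(n,k)$ by $X^n = \sum_{k=0}^{n} S(n,k) X^{\underline{k}}$ (for all $n\ge 0$), with $s(n,k)=S(n,k)=0$ when $n<k$; in particular $S(0,0)=1$. The Bernoulli numbers of the second kind $B_n^*$ are defined by $\frac{t}{\log(1+t)} = \sum_{n \ge 0} B_n^* \frac{t^n}{n!}$ (equivalently $B_n^* = \int_0^1 x^{\underline{n}}\,dx$). *)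

theory Defs
  imports "HOL-Analysis.Analysis" "HOL-Combinatorics.Stirling"
begin

definition falling_fact :: "real \<Rightarrow> nat \<Rightarrow> real" where
  "falling_fact x n = (\<Prod>i<n. x - real i)"

definition stirling1s :: "nat \<Rightarrow> nat \<Rightarrow> int" where
  "stirling1s n k = (-1) ^ (n - k) * int (stirling n k)"

definition bernoulli2 :: "nat \<Rightarrow> real" where
  "bernoulli2 n = integral {0..1} (\<lambda>x. falling_fact x n)"

definition lambda_coeff :: "nat \<Rightarrow> nat \<Rightarrow> nat \<Rightarrow> real" where
  "lambda_coeff r n k =
     (\<Sum>l = 0..r - 1 - k. real ((r - 1) choose l) * real (Stirling (r - 1 - l) k) * real n ^ l)"

end

theory Submission
  imports Defs
begin

text \<open>Both sides equal the integral of \<^term>\<open>falling_fact x n * x ^ (r - 1)\<close> over [0,1].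
  Expanding the falling factorial into powers with the signed Stirling numbers of the first kind
  and integrating the monomials gives the left side. For the right side, write \<open>x = n + (x - n)\<close>,
  expand \<open>x ^ (r - 1)\<close> binomially, turn each power of \<open>x - n\<close> into falling factorials with
  Stirling numbers of the second kind, and absorb them via \<open>x\<^sup>n (x - n)\<^sup>k = x\<^sup>n\<^sup>+\<^sup>k\<close>
  (falling powers); the integral of each \<open>x\<^sup>n\<^sup>+\<^sup>k\<close> is \<^term>\<open>bernoulli2 (n + k)\<close>.\<close>

lemma falling_fact_Suc: "falling_fact x (Suc k) = falling_fact x k * (x - real k)"
  by (simp add: falling_fact_def)

lemma falling_fact_add: "falling_fact x (n + k) = falling_fact x n * falling_fact (x - real n) k"
  by (induction k) (simp_all add: falling_fact_def algebra_simps)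

lemma falling_fact_eq_pochhammer: "falling_fact x n = (-1) ^ n * pochhammer (-x) n"
proof -
  have "falling_fact x n = (\<Prod>i<n. (-1) * (-x + real i))"
    by (simp add: falling_fact_def)
  also have "\<dots> = (\<Prod>i<n. -1) * (\<Prod>i<n. -x + real i)"
    by (rule prod.distrib)
  also have "\<dots> = (-1) ^ n * pochhammer (-x) n"
    by (simp add: pochhammer_prod lessThan_atLeast0)
  finally show ?thesis .
qed

lemma neg_one_power_mult_minus_power:
  fixes x :: "'a::comm_ring_1"
  assumes "k \<le> n"
  shows "(-1) ^ n * (-x) ^ k = (-1) ^ (n - k) * x ^ k"
proof -
  obtain d where "n = k + d" using assms le_Suc_ex by blast
  then have "(-1 :: 'a) ^ n * (-1) ^ k = (-1) ^ (n - k)"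
    by (simp add: power_add mult_ac)
  then show ?thesis by (simp add: power_minus[of x] mult.assoc flip: mult.assoc[of "(-1) ^ n"])
qed

lemma falling_fact_eq_sum_stirling1s:
  "falling_fact x n = (\<Sum>k\<le>n. real_of_int (stirling1s n k) * x ^ k)"
proof -
  have "falling_fact x n = (\<Sum>k\<le>n. (-1) ^ n * (-x) ^ k * real (stirling n k))"
    by (simp add: falling_fact_eq_pochhammer sum_distrib_left mult_ac flip: stirling_pochhammer)
  also have "\<dots> = (\<Sum>k\<le>n. real_of_int (stirling1s n k) * x ^ k)"
    by (intro sum.cong refl) (simp add: neg_one_power_mult_minus_power stirling1s_def)
  finally show ?thesis .
qed

lemma power_eq_sum_Stirling_falling_fact:
  "x ^ m = (\<Sum>k\<le>m. real (Stirling m k) * falling_fact x k)"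
proof (induction m)
  case 0
  then show ?case by (simp add: falling_fact_def)
next
  case (Suc m)
  have "x ^ Suc m = (\<Sum>k\<le>m. real (Stirling m k) * falling_fact x (Suc k))
                 + (\<Sum>k\<le>m. real k * real (Stirling m k) * falling_fact x k)"
    by (simp add: Suc sum_distrib_left falling_fact_Suc algebra_simps flip: sum.distrib)
  also have "(\<Sum>k\<le>m. real k * real (Stirling m k) * falling_fact x k)
           = (\<Sum>k\<le>Suc m. real k * real (Stirling m k) * falling_fact x k)"
    by simp
  also have "\<dots> = (\<Sum>k\<le>m. real (Suc k) * real (Stirling m (Suc k)) * falling_fact x (Suc k))"
    by (subst sum.atMost_Suc_shift) simp
  also have "(\<Sum>k\<le>m. real (Stirling m k) * falling_fact x (Suc k)) + \<dots>
      = (\<Sum>k\<le>m. real (Stirling (Suc m) (Suc k)) * falling_fact x (Suc k))"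
    by (simp add: algebra_simps flip: sum.distrib)
  also have "\<dots> = (\<Sum>k\<le>Suc m. real (Stirling (Suc m) k) * falling_fact x k)"
    unfolding sum.atMost_Suc_shift[of _ m] by simp
  finally show ?case .
qed

lemma falling_fact_mult_power_eq_sum_lambda_coeff:
  "falling_fact x n * x ^ (r - 1) = (\<Sum>k\<le>r - 1. lambda_coeff r n k * falling_fact x (n + k))"
proof -
  define m where "m = r - 1"
  define y where "y = x - real n"
  have binomial_expansion: "x ^ m = (\<Sum>l\<le>m. real (m choose l) * real n ^ l * y ^ (m - l))"
    using binomial_ring[of "real n" y m] by (simp add: y_def)
  have Stirling_expansion: "y ^ (m - l) = (\<Sum>k\<le>m. real (Stirling (m - l) k) * falling_fact y k)" for l
    by (subst power_eq_sum_Stirling_falling_fact) (rule sum.mono_neutral_left; auto)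
  have "falling_fact x n * x ^ m
      = (\<Sum>l\<le>m. \<Sum>k\<le>m. real (m choose l) * real (Stirling (m - l) k) * real n ^ l * falling_fact x (n + k))"
    unfolding binomial_expansion Stirling_expansion by (simp add: sum_distrib_left falling_fact_add y_def mult_ac)
  also have "\<dots> = (\<Sum>k\<le>m. \<Sum>l\<le>m. real (m choose l) * real (Stirling (m - l) k) * real n ^ l * falling_fact x (n + k))"
    by (rule sum.swap)
  also have "\<dots> = (\<Sum>k\<le>m. lambda_coeff r n k * falling_fact x (n + k))"
  proof (rule sum.cong [OF refl])
    fix k assume "k \<in> {..m}"
    then have "(\<Sum>l\<le>m. real (m choose l) * real (Stirling (m - l) k) * real n ^ l)
             = (\<Sum>l = 0..m - k. real (m choose l) * real (Stirling (m - l) k) * real n ^ l)"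
      by (intro sum.mono_neutral_right) auto
    then show "(\<Sum>l\<le>m. real (m choose l) * real (Stirling (m - l) k) * real n ^ l * falling_fact x (n + k))
             = lambda_coeff r n k * falling_fact x (n + k)"
      by (simp add: lambda_coeff_def m_def flip: sum_distrib_right)
  qed
  finally show ?thesis by (simp add: m_def)
qed

lemma has_integral_power:
  fixes a b :: real
  assumes "a \<le> b"
  shows "((\<lambda>x. x ^ m) has_integral (b ^ Suc m - a ^ Suc m) / real (Suc m)) {a..b}"
proof -
  have "((\<lambda>x. x ^ Suc m / real (Suc m)) has_real_derivative x ^ m) (at x within {a..b})" for x
    using DERIV_cdivide[OF DERIV_pow[of "Suc m" x], of "real (Suc m)"]
    by (simp del: of_nat_Suc)
  then show ?thesis
    using fundamental_theorem_of_calculus[OF assms, of "\<lambda>x. x ^ Suc m / real (Suc m)"]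
    by (simp add: has_real_derivative_iff_has_vector_derivative diff_divide_distrib)
qed

lemma has_integral_falling_fact_mult_power:
  "((\<lambda>x. falling_fact x n * x ^ m) has_integral
     (\<Sum>k\<le>n. real_of_int (stirling1s n k) / real (k + m + 1))) {0..1}"
proof -
  have "((\<lambda>x. \<Sum>k\<le>n. real_of_int (stirling1s n k) * x ^ (k + m)) has_integral
         (\<Sum>k\<le>n. real_of_int (stirling1s n k) * (1 / real (Suc (k + m))))) {0..1}"
    using has_integral_power[of 0 1] by (intro has_integral_sum has_integral_mult_right) (simp_all del: of_nat_Suc)
  then show ?thesis
    by (simp add: falling_fact_eq_sum_stirling1s sum_distrib_right power_add mult.assoc)
qed

lemma has_integral_falling_fact: "((\<lambda>x. falling_fact x n) has_integral bernoulli2 n) {0..1}"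
  unfolding bernoulli2_def falling_fact_def
  by (intro integrable_integral integrable_continuous_interval continuous_intros)

theorem theorem6:
  fixes r n :: nat
  assumes "r \<ge> 1"
  shows "(\<Sum>k = 0..n. real_of_int (stirling1s n k) / real (k + r))
         = (\<Sum>k = 0..r - 1. lambda_coeff r n k * bernoulli2 (n + k))"
proof -
  have "((\<lambda>x. falling_fact x n * x ^ (r - 1)) has_integral
         (\<Sum>k = 0..n. real_of_int (stirling1s n k) / real (k + r))) {0..1}"
    using has_integral_falling_fact_mult_power[of n "r - 1"] assms by (simp add: atLeast0AtMost)
  moreover have "((\<lambda>x. falling_fact x n * x ^ (r - 1)) has_integral
         (\<Sum>k = 0..r - 1. lambda_coeff r n k * bernoulli2 (n + k))) {0..1}"
    unfolding falling_fact_mult_power_eq_sum_lambda_coeff atLeast0AtMost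
    by (intro has_integral_sum has_integral_mult_right has_integral_falling_fact) auto
  ultimately show ?thesis
    by (rule has_integral_unique)
qed

end
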